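(* Let $f:\mathbb R^n\to\mathbb R$ be a non-degenerate polynomial with $f(0)=0$, and write $\mathbf 1=(1,\dots,1)$. (i) If $\mathbf 1\notin\Gamma_+(f)$, then $L_e(f)>0$. (ii) If $\mathbf 1\in\Gamma(f)$, then $L_e(f)=0$ and $\Gamma^{(1)}_{\max}(f)\neq\emptyset$. (iii) If $\mathbf 1$ lies in the interior of $\Gamma_+(f)$, then $L_e(f)=0$ and $\Gamma^{(1)}_{\max}(f)=\emptyset$.
   Context: Write $f=\sum_\nu c_\nu x^\nu$. $\Gamma_+(f)$ (Newton polyhedron) is the convex hull of $\bigcup_{c_\nu\ne0}(\nu+\mathbb R^n_{\ge0})$; $\Gamma(f)$ (Newton boundary) is the union of its compact faces. For $a\in\mathbb R^n_{\ge0}$: $m_f(a)=\min\{\langle a,\nu\rangle:\nu\in\Gamma_+(f)\}$, $\gamma_f(a)=\{\nu\in\Gamma_+(f):\langle a,\nu\rangle=m_f(a)\}$, $s(a)=\sum_ia_i$, $h(a)=m_f(a)-s(a)$. For a face $\gamma$, $f_\gamma=\sum_{\nu\in\gamma}c_\nu x^\nu$; $f$ is non-degenerate if for every compact face $\gamma$, $\nabla f_\gamma$ does not vanish at points of $(\mathbb R^* )^n$ where $f_\gamma=0$. Dual Newton polyhedron: on $\mathbb R^n_{\ge0}$ put $a\sim b$ iff $\gamma_f(a)=\gamma_f(b)$; the equivalence classes give a subdivision of $\mathbb R^n_{\ge0}$ into cones. $\Gamma^{(1)}(f)$ is the set of primitive integer generators of the one-dimensional cones of this subdivision, and $\Gamma^{(1)}_+(f)=\{a\in\Gamma^{(1)}(f):m_f(a)>0\}$.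 The leading exponent is $L_e(f)=\sup\bigl(\{0\}\cup\{1-s(a)/m_f(a):a\in\Gamma^{(1)}_+(f)\}\bigr)$, and $\Gamma^{(1)}_{\max}(f)=\{a\in\Gamma^{(1)}_+(f):1-s(a)/m_f(a)=L_e(f)\}$. *)

theory Defs
  imports "HOL-Analysis.Analysis"
begin

text \<open>A real polynomial in the variables indexed by the finite type 'n is given by its
coefficient function c on exponent vectors ('n \<Rightarrow> nat); only finitely many
coefficients are non-zero.\<close>

definition supp :: "(('n::finite \<Rightarrow> nat) \<Rightarrow> real) \<Rightarrow> ('n \<Rightarrow> nat) set" where
  "supp c = {\<nu>. c \<nu> \<noteq> 0}"

definition expv :: "('n::finite \<Rightarrow> nat) \<Rightarrow> real^'n" where
  "expv \<nu> = (\<chi> i. real (\<nu> i))"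

definition peval :: "(('n::finite \<Rightarrow> nat) \<Rightarrow> real) \<Rightarrow> real^'n \<Rightarrow> real" where
  "peval c x = (\<Sum>\<nu>\<in>supp c. c \<nu> * (\<Prod>i\<in>UNIV. (x $ i) ^ (\<nu> i)))"

definition nonneg :: "real^'n::finite \<Rightarrow> bool" where
  "nonneg a \<longleftrightarrow> (\<forall>i. 0 \<le> a $ i)"

definition newton_polyhedron :: "(('n::finite \<Rightarrow> nat) \<Rightarrow> real) \<Rightarrow> (real^'n) set" where
  "newton_polyhedron c =
     convex hull (\<Union>\<nu>\<in>supp c. {expv \<nu> + v | v. nonneg v})"

definition newton_boundary :: "(('n::finite \<Rightarrow> nat) \<Rightarrow> real) \<Rightarrow> (real^'n) set" where
  "newton_boundary c =
     \<Union>{\<gamma>. \<gamma> face_of newton_polyhedron c \<and> compact \<gamma>}"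

definition mf :: "(('n::finite \<Rightarrow> nat) \<Rightarrow> real) \<Rightarrow> real^'n \<Rightarrow> real" where
  "mf c a = Inf {a \<bullet> v | v. v \<in> newton_polyhedron c}"

definition gammaf :: "(('n::finite \<Rightarrow> nat) \<Rightarrow> real) \<Rightarrow> real^'n \<Rightarrow> (real^'n) set" where
  "gammaf c a = {v \<in> newton_polyhedron c. a \<bullet> v = mf c a}"

definition sa :: "real^'n::finite \<Rightarrow> real" where
  "sa a = (\<Sum>i\<in>UNIV. a $ i)"

definition face_coeffs ::
  "(('n::finite \<Rightarrow> nat) \<Rightarrow> real) \<Rightarrow> (real^'n) set \<Rightarrow> ('n \<Rightarrow> nat) \<Rightarrow> real" where
  "face_coeffs c \<gamma> \<nu> = (if expv \<nu> \<in> \<gamma> then c \<nu> else 0)"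

definition partial :: "(real^'n::finite \<Rightarrow> real) \<Rightarrow> 'n \<Rightarrow> real^'n \<Rightarrow> real" where
  "partial g i x = deriv (\<lambda>t. g (\<chi> j. if j = i then t else x $ j)) (x $ i)"

definition nondegenerate :: "(('n::finite \<Rightarrow> nat) \<Rightarrow> real) \<Rightarrow> bool" where
  "nondegenerate c \<longleftrightarrow>
     (\<forall>\<gamma>. \<gamma> face_of newton_polyhedron c \<and> compact \<gamma> \<and> \<gamma> \<noteq> {} \<longrightarrow>
        (\<forall>x::real^'n. (\<forall>i. x $ i \<noteq> 0) \<and> peval (face_coeffs c \<gamma>) x = 0 \<longrightarrow>
           (\<exists>i. partial (peval (face_coeffs c \<gamma>)) i x \<noteq> 0)))"

definition primitive_int :: "real^'n::finite \<Rightarrow> bool" where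
  "primitive_int a \<longleftrightarrow> (\<forall>i. a $ i \<in> \<int>) \<and> a \<noteq> 0 \<and>
     (\<forall>t::real. 0 < t \<and> t < 1 \<longrightarrow> \<not> (\<forall>i. t * a $ i \<in> \<int>))"

text \<open>\<Gamma>^(1)(f): primitive generators of the one-dimensional cones of the dual subdivision,
i.e. nonnegative primitive integer a whose equivalence class (w.r.t. a ~ b iff
\<gamma>_f(a) = \<gamma>_f(b)) is the open ray through a.\<close>
definition gamma1 :: "(('n::finite \<Rightarrow> nat) \<Rightarrow> real) \<Rightarrow> (real^'n) set" where
  "gamma1 c = {a. nonneg a \<and> primitive_int a \<and>
     (\<forall>b. nonneg b \<and> gammaf c b = gammaf c a \<longrightarrow> (\<exists>t>0. b = t *\<^sub>R a))}"

definition gamma1_plus :: "(('n::finite \<Rightarrow> nat) \<Rightarrow> real) \<Rightarrow> (real^'n) set" where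
  "gamma1_plus c = {a \<in> gamma1 c. mf c a > 0}"

definition leading_exponent :: "(('n::finite \<Rightarrow> nat) \<Rightarrow> real) \<Rightarrow> real" where
  "leading_exponent c = Sup ({0} \<union> {1 - sa a / mf c a | a. a \<in> gamma1_plus c})"

definition gamma1_max :: "(('n::finite \<Rightarrow> nat) \<Rightarrow> real) \<Rightarrow> (real^'n) set" where
  "gamma1_max c = {a \<in> gamma1_plus c. 1 - sa a / mf c a = leading_exponent c}"

end

theory Submission
  imports Defs "HOL-Library.Set_Algebras"
begin

text \<open>
  Since \<open>s(a) = \<langle>a, 1\<rangle>\<close>, for nonnegative \<open>a\<close> with \<open>m\<^sub>f(a) > 0\<close> the number \<open>1 - s(a)/m\<^sub>f(a)\<close> is
  positive exactly when the hyperplane \<open>\<langle>a, -\<rangle> = m\<^sub>f(a)\<close> strictly separates \<open>1\<close> from \<open>\<Gamma>\<^sub>+(f)\<close>,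
  and it is zero exactly when \<open>1 \<in> \<gamma>\<^sub>f(a)\<close>. In case (i) a separating hyperplane, and in case (ii)
  a supporting hyperplane at \<open>1\<close>, provides such an \<open>a\<close>, which need not span a ray of the dual
  subdivision. As in the ratio test of the simplex method, \<open>a\<close> is moved inside the linear hull of
  its cone until that cone is a ray; every move only enlarges \<open>\<gamma>\<^sub>f(a)\<close>, so the separation,
  respectively \<open>1 \<in> \<gamma>\<^sub>f(a)\<close>, survives. The linear hull of a ray is cut out by rational
  equations, so the ray contains a primitive integer vector. If \<open>1 \<in> \<Gamma>\<^sub>+(f)\<close> then
  \<open>m\<^sub>f(a) \<le> \<langle>a, 1\<rangle>\<close> for all \<open>a\<close>, so \<open>L\<^sub>e(f) = 0\<close>; if \<open>1\<close> is even interior, the inequality is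
  strict for \<open>a \<noteq> 0\<close>.
\<close>

section \<open>Rational and primitive integer vectors\<close>

definition rational_vec :: "real^'n::finite \<Rightarrow> bool" where
  "rational_vec x \<longleftrightarrow> (\<forall>i. x $ i \<in> \<rat>)"

lemma rational_vec_inner: "rational_vec x \<Longrightarrow> rational_vec y \<Longrightarrow> x \<bullet> y \<in> \<rat>"
  unfolding rational_vec_def inner_vec_def inner_real_def by (intro Rats_sum Rats_mult) auto

lemma rational_vec_diff: "rational_vec x \<Longrightarrow> rational_vec y \<Longrightarrow> rational_vec (x - y)"
  unfolding rational_vec_def by (auto intro: Rats_diff)

lemma rational_vec_scaleR: "r \<in> \<rat> \<Longrightarrow> rational_vec x \<Longrightarrow> rational_vec (r *\<^sub>R x)"
  unfolding rational_vec_def by (auto intro: Rats_mult)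

lemma rational_vec_Basis: "q \<in> Basis \<Longrightarrow> rational_vec (q :: real^'n::finite)"
  unfolding Basis_vec_def rational_vec_def by (auto simp: axis_def)

lemma orthogonal_comp_insert_spanned_by_rational_vecs:
  fixes w :: "real^'n::finite"
  assumes "rational_vec w" "B \<subseteq> W\<^sup>\<bottom>" "\<And>q. q \<in> B \<Longrightarrow> rational_vec q" "W\<^sup>\<bottom> \<subseteq> span B"
  shows "\<exists>B'. B' \<subseteq> (insert w W)\<^sup>\<bottom> \<and> (\<forall>q\<in>B'. rational_vec q) \<and> (insert w W)\<^sup>\<bottom> \<subseteq> span B'"
proof (cases "\<forall>q\<in>B. w \<bullet> q = 0")
  case True
  with assms show ?thesis
    by (intro exI[of _ B]) (auto simp: orthogonal_comp_def orthogonal_def)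
next
  case False
  then obtain q1 where q1: "q1 \<in> B" "w \<bullet> q1 \<noteq> 0" by blast
  \<comment> \<open>One step of Gaussian elimination: project along \<open>q1\<close> onto the hyperplane \<open>{w}\<^sup>\<bottom>\<close>.\<close>
  define proj where "proj x = x - ((w \<bullet> x) / (w \<bullet> q1)) *\<^sub>R q1" for x
  have "linear proj"
    unfolding proj_def
    by (intro linearI) (auto simp: inner_add_right add_divide_distrib algebra_simps)
  have "w \<bullet> proj x = 0" for x
    using q1(2) by (simp add: proj_def inner_diff_right)
  moreover have "v \<bullet> proj q = 0" if "q \<in> B" "v \<in> W" for q v
  proof -
    have "v \<bullet> q = 0" "v \<bullet> q1 = 0"
      using assms(2) that q1(1) by (auto simp: orthogonal_comp_def orthogonal_def)
    then show ?thesis by (simp add: proj_def inner_diff_right)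
  qed
  ultimately have "proj ` B \<subseteq> (insert w W)\<^sup>\<bottom>"
    by (auto simp: orthogonal_comp_def orthogonal_def)
  moreover have "rational_vec (proj q)" if "q \<in> B" for q
    unfolding proj_def using assms(1,3) that q1(1)
    by (intro rational_vec_diff rational_vec_scaleR Rats_divide rational_vec_inner) auto
  moreover have "(insert w W)\<^sup>\<bottom> \<subseteq> span (proj ` B)"
  proof
    fix x assume x: "x \<in> (insert w W)\<^sup>\<bottom>"
    then have "x \<in> span B" using assms(4) by (auto simp: orthogonal_comp_def)
    moreover have "proj x = x" using x by (simp add: proj_def orthogonal_comp_def orthogonal_def)
    ultimately show "x \<in> span (proj ` B)"
      using linear_span_image[OF \<open>linear proj\<close>] by (metis image_eqI)
  qed
  ultimately show ?thesis by (intro exI[of _ "proj ` B"]) auto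
qed

lemma orthogonal_comp_spanned_by_rational_vecs:
  fixes W :: "(real^'n::finite) set"
  assumes "finite W" "\<And>w. w \<in> W \<Longrightarrow> rational_vec w"
  obtains B where "B \<subseteq> W\<^sup>\<bottom>" "\<And>q. q \<in> B \<Longrightarrow> rational_vec q" "W\<^sup>\<bottom> \<subseteq> span B"
proof -
  have "\<exists>B. B \<subseteq> W\<^sup>\<bottom> \<and> (\<forall>q\<in>B. rational_vec q) \<and> W\<^sup>\<bottom> \<subseteq> span B"
    using assms
  proof (induction W rule: finite_induct)
    case empty
    show ?case
      by (intro exI[of _ Basis]) (auto simp: rational_vec_Basis span_Basis orthogonal_comp_def)
  next
    case (insert w W)
    then obtain B where B: "B \<subseteq> W\<^sup>\<bottom>" "\<And>q. q \<in> B \<Longrightarrow> rational_vec q" "W\<^sup>\<bottom> \<subseteq> span B"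
      by auto
    have "rational_vec w" using insert.prems by simp
    then show ?case using B by (rule orthogonal_comp_insert_spanned_by_rational_vecs)
  qed
  with that show ?thesis by blast
qed

lemma integral_multiple_of_rational_vec:
  assumes "rational_vec q"
  obtains K :: nat where "K > 0" "\<And>i. real K * q $ i \<in> \<int>"
proof -
  have "\<exists>n::nat. n > 0 \<and> real n * q $ i \<in> \<int>" for i
  proof -
    obtain a b where "b > 0" "q $ i = of_int a / of_int b"
      using assms Rats_cases' unfolding rational_vec_def by meson
    then show ?thesis by (intro exI[of _ "nat b"]) auto
  qed
  then obtain N where N: "\<And>i. N i > 0" "\<And>i. real (N i) * q $ i \<in> \<int>"
    by metis
  have "real (\<Prod>j\<in>UNIV. N j) * q $ i \<in> \<int>" for i
  proof -
    have "(\<Prod>j\<in>UNIV. N j) = N i * (\<Prod>j\<in>UNIV - {i}. N j)"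
      by (simp add: prod.remove)
    then have "real (\<Prod>j\<in>UNIV. N j) * q $ i = (real (N i) * q $ i) * real (\<Prod>j\<in>UNIV - {i}. N j)"
      by (simp only: of_nat_mult ac_simps)
    then show ?thesis by (simp only: Ints_mult Ints_of_nat N(2))
  qed
  moreover have "(\<Prod>j\<in>UNIV. N j) > 0" using N(1) by simp
  ultimately show ?thesis using that by blast
qed

lemma primitive_multiple_of_integral_vec:
  assumes integral: "\<And>i. z $ i \<in> \<int>" and "z \<noteq> 0"
  obtains s where "s > 0" "primitive_int (s *\<^sub>R z)"
proof -
  obtain j where "z $ j \<noteq> 0" using \<open>z \<noteq> 0\<close> by (auto simp: vec_eq_iff)
  define N where "N = \<bar>z $ j\<bar>"
  have "N > 0" using \<open>z $ j \<noteq> 0\<close> by (simp add: N_def)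
  \<comment> \<open>the \<open>t > 0\<close> making \<open>t *\<^sub>R z\<close> integral lie in \<open>\<nat> / N\<close>, so there is a least one\<close>
  have multiple: "\<exists>k::nat. 0 < k \<and> t = real k / N" if "0 < t" "\<forall>i. t * z $ i \<in> \<int>" for t
  proof -
    have "\<bar>t * z $ j\<bar> \<in> \<int>" using that(2) by (blast intro: Ints_abs)
    then have "t * N \<in> \<nat>"
      unfolding Nats_altdef2 N_def using that(1) by (simp add: abs_mult)
    then obtain k :: nat where k: "t * N = real k" by (auto elim: Nats_cases)
    moreover have "0 < real k" using that(1) \<open>N > 0\<close> by (simp flip: k)
    ultimately show ?thesis
      using \<open>N > 0\<close> by (intro exI[of _ k]) (auto simp: field_simps)
  qed
  define A where "A = {k::nat. 0 < k \<and> (\<forall>i. real k / N * z $ i \<in> \<int>)}"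
  obtain k where "k \<in> A" using multiple[of 1] integral by (force simp: A_def)
  define k0 where "k0 = (LEAST k. k \<in> A)"
  have "k0 \<in> A" unfolding k0_def using \<open>k \<in> A\<close> by (rule LeastI)
  then have "k0 > 0" by (simp add: A_def)
  define s where "s = real k0 / N"
  have "s > 0" using \<open>N > 0\<close> \<open>k0 > 0\<close> by (simp add: s_def)
  have "\<not> (\<forall>i. t * (s *\<^sub>R z) $ i \<in> \<int>)" if t: "0 < t \<and> t < 1" for t
  proof
    assume H: "\<forall>i. t * (s *\<^sub>R z) $ i \<in> \<int>"
    then obtain k where k: "0 < k" "t * s = real k / N"
      using multiple[of "t * s"] \<open>s > 0\<close> t by (auto simp: mult.assoc)
    have "real k / N * z $ i = t * (s *\<^sub>R z) $ i" for i
      by (simp add: mult.assoc flip: k(2))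
    then have "k \<in> A" using H k(1) by (simp add: A_def)
    moreover have "real k = t * real k0"
      using k(2) \<open>N > 0\<close> by (simp add: s_def field_simps)
    then have "real k < real k0"
      using mult_strict_right_mono[of t 1 "real k0"] t \<open>k0 > 0\<close> by simp
    ultimately show False unfolding k0_def using not_less_Least by auto
  qed
  moreover have "(s *\<^sub>R z) $ i \<in> \<int>" for i using \<open>k0 \<in> A\<close> by (simp add: A_def s_def)
  ultimately have "primitive_int (s *\<^sub>R z)"
    using \<open>s > 0\<close> \<open>z \<noteq> 0\<close> by (simp add: primitive_int_def)
  with \<open>s > 0\<close> show ?thesis using that by blast
qed

lemma primitive_multiple_of_rational_vec:
  assumes "rational_vec q" "q \<noteq> 0"
  obtains s where "s > 0" "primitive_int (s *\<^sub>R q)"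
proof -
  obtain K :: nat where K: "K > 0" "\<And>i. real K * q $ i \<in> \<int>"
    using integral_multiple_of_rational_vec assms(1) by blast
  obtain s where "s > 0" "primitive_int (s *\<^sub>R (real K *\<^sub>R q))"
    using primitive_multiple_of_integral_vec[of "real K *\<^sub>R q"] K assms(2) by auto
  then show ?thesis using K(1) that[of "s * real K"] by simp
qed

section \<open>Nonnegative vectors and the ratio test\<close>

lemma nonneg_add: "nonneg x \<Longrightarrow> nonneg y \<Longrightarrow> nonneg (x + y)"
  unfolding nonneg_def by simp

lemma nonneg_inner: "nonneg x \<Longrightarrow> nonneg y \<Longrightarrow> 0 \<le> x \<bullet> y"
  unfolding nonneg_def inner_vec_def by (simp add: sum_nonneg)

lemma nonneg_axis: "nonneg (axis i 1)"
  unfolding nonneg_def axis_def by simp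

lemma convex_nonneg: "convex {v::real^'n::finite. nonneg v}"
  unfolding nonneg_def convex_def by simp

lemma closed_nonneg: "closed {v::real^'n::finite. nonneg v}"
  unfolding nonneg_def by (intro closed_Collect_all closed_Collect_le continuous_intros)

lemma nonneg_one: "nonneg (1::real^'n::finite)"
  by (simp add: nonneg_def)

lemma inner_one_pos:
  assumes "nonneg a" "a \<noteq> 0"
  shows "0 < a \<bullet> (1::real^'n::finite)"
proof -
  obtain i where "a $ i \<noteq> 0" using assms(2) by (auto simp: vec_eq_iff)
  then have "0 < a $ i" using assms(1) by (simp add: nonneg_def less_le)
  also have "a $ i \<le> (\<Sum>j\<in>UNIV. a $ j)"
    using assms(1) by (intro member_le_sum) (auto simp: nonneg_def)
  finally show ?thesis by (simp add: inner_vec_def)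
qed

lemma min_ratio_step:
  fixes b d :: "'a::real_inner"
  assumes "finite V" "v0 \<in> V" "d \<bullet> v0 < 0"
    and feasible: "\<And>v. v \<in> V \<Longrightarrow> 0 \<le> b \<bullet> v"
    and tight: "\<And>v. v \<in> V \<Longrightarrow> b \<bullet> v = 0 \<Longrightarrow> d \<bullet> v = 0"
  obtains t where "\<And>v. v \<in> V \<Longrightarrow> 0 \<le> (b + t *\<^sub>R d) \<bullet> v"
    "\<exists>v\<in>V. b \<bullet> v \<noteq> 0 \<and> (b + t *\<^sub>R d) \<bullet> v = 0"
proof -
  define D where "D = {v \<in> V. d \<bullet> v < 0}"
  define ratio where "ratio v = - (b \<bullet> v) / (d \<bullet> v)" for v
  have D_pos: "0 < b \<bullet> v" if "v \<in> D" for v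
    using that feasible tight by (force simp: D_def)
  have "finite D" "v0 \<in> D" using assms(1-3) by (auto simp: D_def)
  define t where "t = Min (ratio ` D)"
  have "t \<in> ratio ` D"
    unfolding t_def using \<open>finite D\<close> \<open>v0 \<in> D\<close> by (intro Min_in) auto
  then obtain v1 where v1: "v1 \<in> D" "t = ratio v1" by blast
  have t_le: "t \<le> ratio v" if "v \<in> D" for v
    using \<open>finite D\<close> that by (simp add: t_def)
  have "0 < t" using D_pos[OF v1(1)] v1 by (simp add: D_def ratio_def divide_pos_neg)
  have "0 \<le> (b + t *\<^sub>R d) \<bullet> v" if "v \<in> V" for v
  proof (cases "v \<in> D")
    case True
    then show ?thesis
      using mult_right_mono_neg[OF t_le[OF True], of "d \<bullet> v"]
      by (simp add: D_def ratio_def inner_add_left)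
  next
    case False
    then show ?thesis using that feasible[OF that] \<open>0 < t\<close> by (simp add: D_def inner_add_left)
  qed
  moreover have "b \<bullet> v1 \<noteq> 0" "(b + t *\<^sub>R d) \<bullet> v1 = 0"
    using D_pos[OF v1(1)] v1 by (auto simp: D_def ratio_def inner_add_left inner_diff_left)
  ultimately show ?thesis using that v1(1) by (auto simp: D_def)
qed

lemma exists_orthogonal_direction_with_negative_coord:
  fixes b p :: "real^'n::finite"
  assumes "subspace E" "b \<in> E" "b \<bullet> p \<noteq> 0" "\<not> E \<subseteq> span {b}"
  obtains d i where "d \<in> E" "d \<bullet> p = 0" "d $ i < 0"
proof -
  obtain e where e: "e \<in> E" "e \<notin> span {b}" using assms(4) by blast
  define d where "d = e - ((e \<bullet> p) / (b \<bullet> p)) *\<^sub>R b"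
  have "d \<in> E" using assms(1,2) e(1) by (simp add: d_def subspace_diff subspace_scale)
  moreover have "d \<bullet> p = 0" using assms(3) by (simp add: d_def inner_diff_left)
  moreover have "d \<noteq> 0"
  proof
    assume "d = 0"
    then have "e = ((e \<bullet> p) / (b \<bullet> p)) *\<^sub>R b" by (simp add: d_def)
    then have "e \<in> span {b}" by (metis span_base span_scale singletonI)
    then show False using e(2) by blast
  qed
  then obtain i where "d $ i \<noteq> 0" by (auto simp: vec_eq_iff)
  ultimately show ?thesis
    using that[of d i] that[of "- d" i] assms(1) by (force simp: subspace_neg)
qed

section \<open>Newton polyhedron and dual cones\<close>

definition exponents :: "(('n::finite \<Rightarrow> nat) \<Rightarrow> real) \<Rightarrow> (real^'n) set" where
  "exponents c = expv ` supp c"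

lemma nonneg_exponents: "u \<in> exponents c \<Longrightarrow> nonneg u"
  unfolding exponents_def nonneg_def expv_def by auto

lemma newton_polyhedron_eq: "newton_polyhedron c = convex hull (exponents c) + {v. nonneg v}"
proof -
  have "(\<Union>\<nu>\<in>supp c. {expv \<nu> + v | v. nonneg v}) = exponents c + {v. nonneg v}"
    unfolding exponents_def set_plus_def by auto
  then have "newton_polyhedron c = convex hull (exponents c) + convex hull {v. nonneg v}"
    by (simp add: newton_polyhedron_def convex_hull_set_plus)
  also have "convex hull {v::real^'n. nonneg v} = {v. nonneg v}"
    using convex_nonneg by (rule hull_same)
  finally show ?thesis .
qed

lemma convex_newton_polyhedron: "convex (newton_polyhedron c)"
  unfolding newton_polyhedron_def by simp

lemma newton_polyhedron_nonneg:
  assumes "v \<in> newton_polyhedron c"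
  shows "nonneg v"
proof -
  have "convex hull (exponents c) \<subseteq> {v. nonneg v}"
    using convex_nonneg nonneg_exponents by (intro hull_minimal) auto
  then show ?thesis
    using assms nonneg_add unfolding newton_polyhedron_eq set_plus_def by blast
qed

lemma newton_polyhedron_add_nonneg:
  assumes "v \<in> newton_polyhedron c" "nonneg w"
  shows "v + w \<in> newton_polyhedron c"
proof -
  obtain h x where "h \<in> convex hull (exponents c)" "nonneg x" "v = h + x"
    using assms(1) unfolding newton_polyhedron_eq set_plus_def by auto
  then show ?thesis
    using assms(2) nonneg_add unfolding newton_polyhedron_eq set_plus_def
    by (metis (mono_tags, lifting) add.assoc mem_Collect_eq)
qed

lemma exponents_subset_newton_polyhedron: "exponents c \<subseteq> newton_polyhedron c"
proof -
  have "nonneg (0::real^'n)" by (simp add: nonneg_def)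
  then show ?thesis
    unfolding newton_polyhedron_eq set_plus_def by (force intro: hull_inc)
qed

definition exponent_min :: "(('n::finite \<Rightarrow> nat) \<Rightarrow> real) \<Rightarrow> real^'n \<Rightarrow> real" where
  "exponent_min c a = Min ((\<bullet>) a ` exponents c)"

definition minimizing_exponents :: "(('n::finite \<Rightarrow> nat) \<Rightarrow> real) \<Rightarrow> real^'n \<Rightarrow> (real^'n) set" where
  "minimizing_exponents c a = {u \<in> exponents c. a \<bullet> u = exponent_min c a}"

definition zero_coords :: "real^'n::finite \<Rightarrow> 'n set" where
  "zero_coords a = {i. a $ i = 0}"

text \<open>For nonnegative \<open>a\<close> and \<open>b\<close>: \<open>b\<close> lies in the closure of the cone of the dual subdivision
  containing \<open>a\<close>.\<close>
definition specializes :: "(('n::finite \<Rightarrow> nat) \<Rightarrow> real) \<Rightarrow> real^'n \<Rightarrow> real^'n \<Rightarrow> bool" where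
  "specializes c a b \<longleftrightarrow>
     minimizing_exponents c a \<subseteq> minimizing_exponents c b \<and> zero_coords a \<subseteq> zero_coords b"

text \<open>For nonnegative \<open>a\<close>, \<open>class_space c a\<close> is the linear hull of the cone of the dual subdivision
  containing \<open>a\<close>: the directions that keep the zero coordinates of \<open>a\<close> at zero and do not separate
  the exponents minimising \<open>\<langle>a, -\<rangle>\<close>.\<close>
definition class_constraints :: "(('n::finite \<Rightarrow> nat) \<Rightarrow> real) \<Rightarrow> real^'n \<Rightarrow> (real^'n) set" where
  "class_constraints c a = (\<lambda>i. axis i 1) ` zero_coords a
     \<union> (\<lambda>(u, u'). u - u') ` (minimizing_exponents c a \<times> minimizing_exponents c a)"

definition class_space :: "(('n::finite \<Rightarrow> nat) \<Rightarrow> real) \<Rightarrow> real^'n \<Rightarrow> (real^'n) set" where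
  "class_space c a = (class_constraints c a)\<^sup>\<bottom>"

lemma class_space_iff:
  "d \<in> class_space c a \<longleftrightarrow> (\<forall>i\<in>zero_coords a. d $ i = 0)
     \<and> (\<forall>u\<in>minimizing_exponents c a. \<forall>u'\<in>minimizing_exponents c a. d \<bullet> u = d \<bullet> u')"
proof -
  have "d \<in> class_space c a \<longleftrightarrow> (\<forall>i\<in>zero_coords a. d \<bullet> axis i 1 = 0)
     \<and> (\<forall>u\<in>minimizing_exponents c a. \<forall>u'\<in>minimizing_exponents c a. d \<bullet> (u - u') = 0)"
    unfolding class_space_def class_constraints_def orthogonal_comp_def orthogonal_def
    by (auto simp: inner_commute)
  then show ?thesis by (simp add: inner_diff_right inner_axis)
qed

lemma class_space_zero_coord: "d \<in> class_space c a \<Longrightarrow> a $ i = 0 \<Longrightarrow> d $ i = 0"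
  unfolding class_space_iff zero_coords_def by blast

lemma class_space_inner_eq:
  "d \<in> class_space c a \<Longrightarrow> u \<in> minimizing_exponents c a \<Longrightarrow> u' \<in> minimizing_exponents c a
    \<Longrightarrow> d \<bullet> u = d \<bullet> u'"
  unfolding class_space_iff by blast

lemma subspace_class_space: "subspace (class_space c a)"
  unfolding class_space_def by (rule subspace_orthogonal_comp)

lemma self_mem_class_space: "a \<in> class_space c a"
  unfolding class_space_iff zero_coords_def minimizing_exponents_def by simp

lemma class_space_cong:
  "minimizing_exponents c a = minimizing_exponents c b \<Longrightarrow> zero_coords a = zero_coords b
    \<Longrightarrow> class_space c a = class_space c b"
  unfolding class_space_def class_constraints_def by simp

definition cone_constraints :: "(('n::finite \<Rightarrow> nat) \<Rightarrow> real) \<Rightarrow> real^'n \<Rightarrow> (real^'n) set" where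
  "cone_constraints c u0 = range (\<lambda>j. axis j 1) \<union> (\<lambda>u. u - u0) ` exponents c"

lemma specializes_trans: "specializes c a b \<Longrightarrow> specializes c b d \<Longrightarrow> specializes c a d"
  unfolding specializes_def by blast

lemma inner_eq_0_if_zero_coords_subset:
  assumes "nonneg a" "nonneg w" "a \<bullet> w = 0" "zero_coords a \<subseteq> zero_coords b"
  shows "b \<bullet> w = 0"
proof -
  have "a $ i * w $ i = 0" for i
    using assms(1-3) sum_nonneg_eq_0_iff[of UNIV "\<lambda>i. a $ i * w $ i"]
    by (auto simp: inner_vec_def nonneg_def)
  then have "b $ i * w $ i = 0" for i
    using assms(4) by (force simp: zero_coords_def)
  then show ?thesis by (auto simp: inner_vec_def intro!: sum.neutral)
qed

lemma card_less_if_strictly_specializes: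
  assumes "finite (minimizing_exponents c b)" "specializes c a b" "\<not> specializes c b a"
  shows "card (minimizing_exponents c a) + card (zero_coords a)
    < card (minimizing_exponents c b) + card (zero_coords b)"
proof -
  have "card (minimizing_exponents c a) \<le> card (minimizing_exponents c b)"
    "card (zero_coords a) \<le> card (zero_coords b)"
    using assms by (auto simp: specializes_def intro: card_mono)
  moreover have
    "minimizing_exponents c a \<subset> minimizing_exponents c b \<or> zero_coords a \<subset> zero_coords b"
    using assms(2,3) by (auto simp: specializes_def)
  then have "card (minimizing_exponents c a) < card (minimizing_exponents c b)
      \<or> card (zero_coords a) < card (zero_coords b)"
    using assms(1) by (auto intro: psubset_card_mono)
  ultimately show ?thesis by linarith
qed

locale nonzero_polynomial =
  fixes c :: "('n::finite \<Rightarrow> nat) \<Rightarrow> real"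
  assumes finite_supp: "finite (supp c)" and supp_nonempty: "supp c \<noteq> {}"
begin

lemma finite_exponents: "finite (exponents c)"
  using finite_supp by (simp add: exponents_def)

lemma exponents_nonempty: "exponents c \<noteq> {}"
  using supp_nonempty by (simp add: exponents_def)

lemma newton_polyhedron_nonempty: "newton_polyhedron c \<noteq> {}"
  using exponents_subset_newton_polyhedron exponents_nonempty by blast

lemma closed_newton_polyhedron: "closed (newton_polyhedron c)"
proof -
  have "newton_polyhedron c = (\<Union>x\<in>convex hull (exponents c). \<Union>y\<in>{v. nonneg v}. {x + y})"
    unfolding newton_polyhedron_eq set_plus_def by blast
  then show ?thesis
    using compact_closed_sums[OF finite_imp_compact_convex_hull[OF finite_exponents] closed_nonneg]
    by simp
qed

lemma not_bounded_newton_polyhedron: "\<not> bounded (newton_polyhedron c)"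
proof
  assume "bounded (newton_polyhedron c)"
  then obtain B where B: "\<And>x. x \<in> newton_polyhedron c \<Longrightarrow> norm x \<le> B"
    unfolding bounded_iff by blast
  obtain v where v: "v \<in> newton_polyhedron c" using newton_polyhedron_nonempty by blast
  define x where "x = v + (\<bar>B\<bar> + 1) *\<^sub>R 1"
  have "nonneg ((\<bar>B\<bar> + 1) *\<^sub>R (1::real^'n))" by (simp add: nonneg_def)
  then have "x \<in> newton_polyhedron c"
    using newton_polyhedron_add_nonneg[OF v] by (simp add: x_def)
  moreover have "\<bar>B\<bar> + 1 \<le> x $ i" for i
    using newton_polyhedron_nonneg[OF v] by (simp add: x_def nonneg_def)
  then have "\<bar>B\<bar> + 1 \<le> norm x"
    using component_le_norm_cart by (metis abs_ge_self order_trans)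
  ultimately show False using B by fastforce
qed

lemma nonneg_if_bdd_below_newton_polyhedron:
  assumes "bdd_below ((\<bullet>) a ` newton_polyhedron c)"
  shows "nonneg a"
  unfolding nonneg_def
proof (rule allI, rule ccontr)
  fix i assume "\<not> 0 \<le> a $ i"
  obtain \<beta> where \<beta>: "\<And>x. x \<in> newton_polyhedron c \<Longrightarrow> \<beta> \<le> a \<bullet> x"
    using assms by (auto simp: bdd_below_def)
  obtain v where v: "v \<in> newton_polyhedron c" using newton_polyhedron_nonempty by blast
  \<comment> \<open>moving from \<open>v\<close> in direction \<open>axis i 1\<close> decreases \<open>\<langle>a, -\<rangle>\<close> without bound\<close>
  define t where "t = (\<bar>a \<bullet> v - \<beta>\<bar> + 1) / - a $ i"
  have "t \<ge> 0" unfolding t_def using \<open>\<not> 0 \<le> a $ i\<close> by (intro divide_nonneg_pos) auto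
  then have "v + t *\<^sub>R axis i 1 \<in> newton_polyhedron c"
    using newton_polyhedron_add_nonneg[OF v] by (simp add: nonneg_def axis_def)
  moreover have "t * a $ i = - (\<bar>a \<bullet> v - \<beta>\<bar> + 1)"
    unfolding t_def using \<open>\<not> 0 \<le> a $ i\<close> by simp
  then have "a \<bullet> (v + t *\<^sub>R axis i 1) = a \<bullet> v - (\<bar>a \<bullet> v - \<beta>\<bar> + 1)"
    by (simp add: inner_add_right inner_axis)
  ultimately show False
    using \<beta>[of "v + t *\<^sub>R axis i 1"] abs_ge_self[of "a \<bullet> v - \<beta>"] by linarith
qed

lemma exponent_min_le: "u \<in> exponents c \<Longrightarrow> exponent_min c a \<le> a \<bullet> u"
  unfolding exponent_min_def using finite_exponents by simp

lemma minimizing_exponents_nonempty: "minimizing_exponents c a \<noteq> {}"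
proof -
  have "exponent_min c a \<in> (\<bullet>) a ` exponents c"
    unfolding exponent_min_def using finite_exponents exponents_nonempty by (intro Min_in) auto
  then show ?thesis unfolding minimizing_exponents_def by force
qed

lemma finite_minimizing_exponents: "finite (minimizing_exponents c a)"
  using finite_exponents by (simp add: minimizing_exponents_def)

lemma minimizing_exponentsI:
  assumes "u0 \<in> exponents c" "\<And>u. u \<in> exponents c \<Longrightarrow> a \<bullet> u0 \<le> a \<bullet> u"
  shows "u0 \<in> minimizing_exponents c a"
  unfolding minimizing_exponents_def exponent_min_def
  using assms finite_exponents by (auto intro!: Min_eqI[symmetric])

lemma minimizing_exponents_iff:
  assumes "u0 \<in> minimizing_exponents c a"
  shows "u \<in> minimizing_exponents c a \<longleftrightarrow> u \<in> exponents c \<and> a \<bullet> u = a \<bullet> u0"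
  using assms by (simp add: minimizing_exponents_def)

lemma exponent_min_le_convex_hull:
  assumes "h \<in> convex hull (exponents c)"
  shows "exponent_min c a \<le> a \<bullet> h"
proof -
  have "convex hull (exponents c) \<subseteq> {x. exponent_min c a \<le> a \<bullet> x}"
    by (rule hull_minimal) (auto simp: exponent_min_le convex_halfspace_ge)
  then show ?thesis using assms by blast
qed

lemma exponent_min_le_newton_polyhedron:
  assumes "nonneg a" "v \<in> newton_polyhedron c"
  shows "exponent_min c a \<le> a \<bullet> v"
proof -
  obtain h w where hw: "h \<in> convex hull (exponents c)" "nonneg w" "v = h + w"
    using assms(2) unfolding newton_polyhedron_eq set_plus_def by blast
  have "exponent_min c a \<le> a \<bullet> h" "0 \<le> a \<bullet> w"
    using exponent_min_le_convex_hull[OF hw(1)] nonneg_inner[OF assms(1) hw(2)] by simp_all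
  then show ?thesis by (simp add: hw(3) inner_add_right)
qed

lemma mf_eq_exponent_min:
  assumes "nonneg a"
  shows "mf c a = exponent_min c a"
  unfolding mf_def
proof (rule cInf_eq_minimum)
  obtain u where "u \<in> minimizing_exponents c a" using minimizing_exponents_nonempty by blast
  then show "exponent_min c a \<in> {a \<bullet> v |v. v \<in> newton_polyhedron c}"
    using exponents_subset_newton_polyhedron by (force simp: minimizing_exponents_def)
qed (use exponent_min_le_newton_polyhedron[OF assms] in blast)

lemma gammaf_eq:
  "nonneg a \<Longrightarrow> gammaf c a = {v \<in> newton_polyhedron c. a \<bullet> v = exponent_min c a}"
  by (simp add: gammaf_def mf_eq_exponent_min)

lemma gammaf_zero: "gammaf c 0 = newton_polyhedron c"
proof -
  have "(\<bullet>) 0 ` exponents c = {0}" using exponents_nonempty by auto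
  then have "exponent_min c 0 = 0" by (simp add: exponent_min_def)
  then show ?thesis by (simp add: gammaf_eq nonneg_def)
qed

lemma gammaf_neq_newton_polyhedron:
  assumes "nonneg a" "a \<noteq> 0"
  shows "gammaf c a \<noteq> newton_polyhedron c"
proof
  assume eq: "gammaf c a = newton_polyhedron c"
  obtain i where "a $ i \<noteq> 0" using assms(2) by (auto simp: vec_eq_iff)
  then have "a $ i > 0" using assms(1) by (simp add: nonneg_def less_le)
  obtain u where u: "u \<in> minimizing_exponents c a" using minimizing_exponents_nonempty by blast
  then have "u \<in> newton_polyhedron c"
    using exponents_subset_newton_polyhedron by (auto simp: minimizing_exponents_def)
  then have "u + axis i 1 \<in> newton_polyhedron c"
    by (rule newton_polyhedron_add_nonneg[OF _ nonneg_axis])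
  then have "a \<bullet> (u + axis i 1) = exponent_min c a"
    using eq gammaf_eq[OF assms(1)] by blast
  moreover have "a \<bullet> u = exponent_min c a" using u by (simp add: minimizing_exponents_def)
  ultimately show False using \<open>a $ i > 0\<close> by (simp add: inner_add_right inner_axis)
qed

lemma minimizing_exponents_scaleR:
  assumes "s > 0"
  shows "minimizing_exponents c (s *\<^sub>R a) = minimizing_exponents c a"
proof -
  obtain u0 where u0: "u0 \<in> minimizing_exponents c a" using minimizing_exponents_nonempty by blast
  have u0': "u0 \<in> minimizing_exponents c (s *\<^sub>R a)"
  proof (rule minimizing_exponentsI)
    show "u0 \<in> exponents c" using u0 by (simp add: minimizing_exponents_def)
    show "s *\<^sub>R a \<bullet> u0 \<le> s *\<^sub>R a \<bullet> u" if "u \<in> exponents c" for u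
      using exponent_min_le[OF that, of a] u0 assms by (simp add: minimizing_exponents_def)
  qed
  then show ?thesis
    using assms by (auto simp: minimizing_exponents_iff[OF u0] minimizing_exponents_iff[OF u0'])
qed

lemma minimizing_exponents_subset_gammaf:
  "nonneg a \<Longrightarrow> minimizing_exponents c a \<subseteq> gammaf c a"
  using exponents_subset_newton_polyhedron by (auto simp: gammaf_eq minimizing_exponents_def)

lemma convex_hull_minimizing_exponents:
  assumes "h \<in> convex hull (exponents c)" "a \<bullet> h = exponent_min c a"
  shows "h \<in> convex hull (minimizing_exponents c a)"
proof -
  let ?F = "convex hull (exponents c) \<inter> {x. a \<bullet> x = exponent_min c a}"
  have "?F face_of convex hull (exponents c)"
    by (rule face_of_Int_supporting_hyperplane_ge) (auto simp: exponent_min_le_convex_hull)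
  then obtain S where S: "S \<subseteq> exponents c" "?F = convex hull S"
    using face_of_convex_hull_subset[OF finite_imp_compact[OF finite_exponents]] by blast
  then have "S \<subseteq> minimizing_exponents c a"
    using hull_subset[of S convex] by (auto simp: minimizing_exponents_def)
  then show ?thesis using assms S(2) hull_mono by blast
qed

lemma gammaf_mono:
  assumes "nonneg a" "nonneg b" "specializes c a b"
  shows "gammaf c a \<subseteq> gammaf c b"
proof
  fix v assume "v \<in> gammaf c a"
  then have v: "v \<in> newton_polyhedron c" "a \<bullet> v = exponent_min c a"
    using gammaf_eq[OF assms(1)] by auto
  then obtain h w where hw: "h \<in> convex hull (exponents c)" "nonneg w" "v = h + w"
    unfolding newton_polyhedron_eq set_plus_def by blast
  have "exponent_min c a \<le> a \<bullet> h" "0 \<le> a \<bullet> w"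
    using exponent_min_le_convex_hull[OF hw(1)] nonneg_inner[OF assms(1) hw(2)] by simp_all
  then have ah: "a \<bullet> h = exponent_min c a" and aw: "a \<bullet> w = 0"
    using v(2) hw(3) by (simp_all add: inner_add_right)
  \<comment> \<open>\<open>h\<close> is a convex combination of exponents minimising \<open>\<langle>a, -\<rangle>\<close>, and \<open>w\<close> lives on the zero
    coordinates of \<open>a\<close>; both properties pass to \<open>b\<close>.\<close>
  have "convex hull (minimizing_exponents c a) \<subseteq> {x. b \<bullet> x = exponent_min c b}"
    using assms(3)
    by (intro hull_minimal) (auto simp: specializes_def minimizing_exponents_def convex_hyperplane)
  then have "b \<bullet> h = exponent_min c b"
    using convex_hull_minimizing_exponents[OF hw(1) ah] by blast
  moreover have "b \<bullet> w = 0"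
    using inner_eq_0_if_zero_coords_subset[OF assms(1) hw(2) aw] assms(3)
    by (simp add: specializes_def)
  ultimately show "v \<in> gammaf c b"
    using v(1) hw(3) gammaf_eq[OF assms(2)] by (simp add: inner_add_right)
qed

lemma class_space_if_gammaf_eq:
  assumes "nonneg a" "nonneg b" "gammaf c b = gammaf c a"
  shows "b \<in> class_space c a"
proof -
  have on_face: "b \<bullet> v = exponent_min c b" if "v \<in> gammaf c a" for v
    using that assms(3) gammaf_eq[OF assms(2)] by auto
  have "b \<bullet> u = b \<bullet> u'" if "u \<in> minimizing_exponents c a" "u' \<in> minimizing_exponents c a" for u u'
  proof -
    have "u \<in> gammaf c a" "u' \<in> gammaf c a"
      using that minimizing_exponents_subset_gammaf[OF assms(1)] by auto
    then show ?thesis by (simp add: on_face)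
  qed
  moreover have "b $ i = 0" if "i \<in> zero_coords a" for i
  proof -
    obtain u where u: "u \<in> minimizing_exponents c a" using minimizing_exponents_nonempty by blast
    then have "u \<in> newton_polyhedron c"
      using exponents_subset_newton_polyhedron by (auto simp: minimizing_exponents_def)
    then have "u + axis i 1 \<in> newton_polyhedron c"
      by (rule newton_polyhedron_add_nonneg[OF _ nonneg_axis])
    moreover have "a \<bullet> (u + axis i 1) = exponent_min c a"
      using u that
      by (simp add: minimizing_exponents_def zero_coords_def inner_add_right inner_axis)
    ultimately have "u + axis i 1 \<in> gammaf c a" by (simp add: gammaf_eq[OF assms(1)])
    moreover have "u \<in> gammaf c a" using u minimizing_exponents_subset_gammaf[OF assms(1)] by auto
    ultimately have "b \<bullet> (u + axis i 1) = b \<bullet> u" by (simp add: on_face)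
    then show ?thesis by (simp add: inner_add_right inner_axis)
  qed
  ultimately show ?thesis unfolding class_space_iff by blast
qed

section \<open>Moving to a ray of the dual subdivision\<close>

lemma finite_cone_constraints: "finite (cone_constraints c u0)"
  using finite_exponents by (simp add: cone_constraints_def)

lemma cone_constraints_nonneg_iff:
  assumes "u0 \<in> exponents c"
  shows "(\<forall>v\<in>cone_constraints c u0. 0 \<le> x \<bullet> v) \<longleftrightarrow> nonneg x \<and> u0 \<in> minimizing_exponents c x"
proof
  assume H: "\<forall>v\<in>cone_constraints c u0. 0 \<le> x \<bullet> v"
  have "0 \<le> x \<bullet> axis j 1" for j
    using H by (simp add: cone_constraints_def)
  then have "nonneg x" by (simp add: nonneg_def inner_axis)
  have "0 \<le> x \<bullet> (u - u0)" if "u \<in> exponents c" for u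
    using H that by (simp add: cone_constraints_def)
  then have "u0 \<in> minimizing_exponents c x"
    using assms by (intro minimizing_exponentsI) (auto simp: inner_diff_right)
  with \<open>nonneg x\<close> show "nonneg x \<and> u0 \<in> minimizing_exponents c x" ..
next
  assume "nonneg x \<and> u0 \<in> minimizing_exponents c x"
  then show "\<forall>v\<in>cone_constraints c u0. 0 \<le> x \<bullet> v"
    using exponent_min_le
    by (auto simp: cone_constraints_def nonneg_def inner_axis inner_diff_right
        minimizing_exponents_def)
qed

lemma class_space_orthogonal_tight_constraints:
  assumes "d \<in> class_space c b" "u0 \<in> minimizing_exponents c b"
    and "v \<in> cone_constraints c u0" "b \<bullet> v = 0"
  shows "d \<bullet> v = 0"
  using assms(3,4) class_space_zero_coord[OF assms(1)] class_space_inner_eq[OF assms(1) _ assms(2)]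
    minimizing_exponents_iff[OF assms(2)]
  by (auto simp: cone_constraints_def inner_axis inner_diff_right)

lemma specializes_along_class_space:
  assumes "d \<in> class_space c b" "u0 \<in> minimizing_exponents c b"
    and "u0 \<in> minimizing_exponents c (b + t *\<^sub>R d)"
  shows "specializes c b (b + t *\<^sub>R d)"
  using class_space_zero_coord[OF assms(1)] class_space_inner_eq[OF assms(1) _ assms(2)]
  by (auto simp: specializes_def zero_coords_def inner_add_left
      minimizing_exponents_iff[OF assms(2)] minimizing_exponents_iff[OF assms(3)])

lemma not_specializes_if_constraint_becomes_tight:
  assumes "u0 \<in> minimizing_exponents c b" "u0 \<in> minimizing_exponents c b'"
    and "v \<in> cone_constraints c u0" "b \<bullet> v \<noteq> 0" "b' \<bullet> v = 0"
  shows "\<not> specializes c b' b"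
proof -
  consider j where "v = axis j 1" | u where "u \<in> exponents c" "v = u - u0"
    using assms(3) by (auto simp: cone_constraints_def)
  then show ?thesis
  proof cases
    case 1
    then have "j \<in> zero_coords b'" "j \<notin> zero_coords b"
      using assms(4,5) by (simp_all add: zero_coords_def inner_axis)
    then show ?thesis by (auto simp: specializes_def)
  next
    case 2
    then have "u \<in> minimizing_exponents c b'" "u \<notin> minimizing_exponents c b"
      using assms(4,5) by (simp_all add: minimizing_exponents_iff[OF assms(1)]
          minimizing_exponents_iff[OF assms(2)] inner_diff_right)
    then show ?thesis by (auto simp: specializes_def)
  qed
qed

lemma specialize_step:
  assumes "nonneg b" "d \<in> class_space c b" "d $ i < 0"
  obtains t where "nonneg (b + t *\<^sub>R d)" "specializes c b (b + t *\<^sub>R d)"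
    "\<not> specializes c (b + t *\<^sub>R d) b"
proof -
  obtain u0 where u0: "u0 \<in> minimizing_exponents c b" using minimizing_exponents_nonempty by blast
  then have "u0 \<in> exponents c" by (simp add: minimizing_exponents_def)
  have feasible: "0 \<le> b \<bullet> v" if "v \<in> cone_constraints c u0" for v
    using cone_constraints_nonneg_iff[OF \<open>u0 \<in> exponents c\<close>] assms(1) u0 that by blast
  have tight: "d \<bullet> v = 0" if "v \<in> cone_constraints c u0" "b \<bullet> v = 0" for v
    using class_space_orthogonal_tight_constraints[OF assms(2) u0 that] .
  have "axis i 1 \<in> cone_constraints c u0" "d \<bullet> axis i 1 < 0"
    using assms(3) by (simp_all add: cone_constraints_def inner_axis)
  then obtain t where t: "\<And>v. v \<in> cone_constraints c u0 \<Longrightarrow> 0 \<le> (b + t *\<^sub>R d) \<bullet> v"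
      "\<exists>v\<in>cone_constraints c u0. b \<bullet> v \<noteq> 0 \<and> (b + t *\<^sub>R d) \<bullet> v = 0"
    using min_ratio_step[OF finite_cone_constraints _ _ feasible tight] by blast
  then have "nonneg (b + t *\<^sub>R d)" "u0 \<in> minimizing_exponents c (b + t *\<^sub>R d)"
    using cone_constraints_nonneg_iff[OF \<open>u0 \<in> exponents c\<close>] by blast+
  then show ?thesis
    using that specializes_along_class_space[OF assms(2) u0]
      not_specializes_if_constraint_becomes_tight[OF u0] t(2) by blast
qed

lemma exists_ray_specialization:
  assumes "nonneg b" "0 < b \<bullet> p"
  obtains a where "nonneg a" "specializes c b a" "0 < a \<bullet> p" "class_space c a \<subseteq> span {a}"
proof -
  define rank where "rank x = card (minimizing_exponents c x) + card (zero_coords x)" for x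
  have rank_le: "rank x \<le> card (exponents c) + CARD('n)" for x
    unfolding rank_def minimizing_exponents_def using finite_exponents
    by (intro add_mono card_mono) auto
  have "\<exists>a. nonneg a \<and> specializes c b a \<and> 0 < a \<bullet> p \<and> class_space c a \<subseteq> span {a}"
    using assms
  proof (induction "card (exponents c) + CARD('n) - rank b" arbitrary: b rule: less_induct)
    case less
    show ?case
    proof (cases "class_space c b \<subseteq> span {b}")
      case True
      then show ?thesis using less.prems by (auto simp: specializes_def)
    next
      case False
      moreover have "b \<bullet> p \<noteq> 0" using less.prems(2) by simp
      ultimately obtain d i where d: "d \<in> class_space c b" "d \<bullet> p = 0" "d $ i < 0"
        using exists_orthogonal_direction_with_negative_coord[OF subspace_class_space
            self_mem_class_space]
        by blast
      then obtain t where t: "nonneg (b + t *\<^sub>R d)" "specializes c b (b + t *\<^sub>R d)"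
          "\<not> specializes c (b + t *\<^sub>R d) b"
        using specialize_step[OF less.prems(1)] by blast
      have "rank b < rank (b + t *\<^sub>R d)"
        using card_less_if_strictly_specializes[OF finite_minimizing_exponents t(2,3)]
        by (simp add: rank_def)
      moreover have "0 < (b + t *\<^sub>R d) \<bullet> p" using d(2) less.prems(2) by (simp add: inner_add_left)
      ultimately obtain a where "nonneg a" "specializes c (b + t *\<^sub>R d) a" "0 < a \<bullet> p"
          "class_space c a \<subseteq> span {a}"
        using less.hyps[of "b + t *\<^sub>R d"] rank_le[of "b + t *\<^sub>R d"] t(1) by fastforce
      then show ?thesis using specializes_trans[OF t(2)] by blast
    qed
  qed
  then show ?thesis using that by blast
qed

lemma primitive_multiple_if_class_space_line:
  assumes "b \<noteq> 0" "class_space c b \<subseteq> span {b}"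
  obtains \<sigma> where "\<sigma> > 0" "primitive_int (\<sigma> *\<^sub>R b)"
proof -
  have "finite (class_constraints c b)"
    using finite_minimizing_exponents by (simp add: class_constraints_def)
  moreover have "rational_vec w" if "w \<in> class_constraints c b" for w
  proof -
    have "rational_vec u" if "u \<in> exponents c" for u
      using that by (auto simp: exponents_def expv_def rational_vec_def)
    then show ?thesis
      using that
      by (auto simp: class_constraints_def minimizing_exponents_def rational_vec_def axis_def
          intro: rational_vec_diff)
  qed
  ultimately obtain B where B: "B \<subseteq> class_space c b" "\<And>q. q \<in> B \<Longrightarrow> rational_vec q"
      "class_space c b \<subseteq> span B"
    using orthogonal_comp_spanned_by_rational_vecs unfolding class_space_def by metis
  \<comment> \<open>the class space is the rational subspace \<open>span {b}\<close>, so \<open>b\<close> is a multiple of a rational vector\<close>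
  have "\<not> B \<subseteq> {0}"
  proof
    assume "B \<subseteq> {0}"
    then have "span B \<subseteq> {0}" using span_mono[of B "{0}"] by simp
    then show False using B(3) self_mem_class_space assms(1) by blast
  qed
  then obtain q where q: "q \<in> B" "q \<noteq> 0" by blast
  then obtain t where t: "q = t *\<^sub>R b" using B(1) assms(2) by (auto simp: span_singleton)
  have "rational_vec (sgn t *\<^sub>R q)" using B(2)[OF q(1)]
    by (intro rational_vec_scaleR) (auto simp: sgn_real_def)
  moreover have "sgn t *\<^sub>R q \<noteq> 0" using q(2) t by (auto simp: sgn_real_def)
  ultimately obtain s where "s > 0" "primitive_int (s *\<^sub>R (sgn t *\<^sub>R q))"
    by (rule primitive_multiple_of_rational_vec)
  moreover have "sgn t *\<^sub>R q = \<bar>t\<bar> *\<^sub>R b" using t by (simp add: abs_sgn)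
  moreover have "t \<noteq> 0" using q(2) t by auto
  ultimately show ?thesis using that[of "s * \<bar>t\<bar>"] by simp
qed

lemma gamma1I:
  assumes "nonneg a" "primitive_int a" "class_space c a \<subseteq> span {a}"
  shows "a \<in> gamma1 c"
  unfolding gamma1_def
proof (intro CollectI conjI allI impI assms(1,2))
  fix b assume b: "nonneg b \<and> gammaf c b = gammaf c a"
  have "a \<noteq> 0" using assms(2) by (simp add: primitive_int_def)
  then obtain i where "a $ i > 0" using assms(1) by (force simp: vec_eq_iff nonneg_def less_le)
  have "b \<in> span {a}" using class_space_if_gammaf_eq[OF assms(1)] b assms(3) by blast
  then obtain t where t: "b = t *\<^sub>R a" by (auto simp: span_singleton)
  have "b \<noteq> 0" using b gammaf_zero gammaf_neq_newton_polyhedron[OF assms(1) \<open>a \<noteq> 0\<close>] by auto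
  then have "t \<noteq> 0" using t by auto
  moreover have "0 \<le> t * a $ i" using b t by (simp add: nonneg_def)
  ultimately have "t > 0" using \<open>a $ i > 0\<close> by (simp add: zero_le_mult_iff)
  then show "\<exists>t>0. b = t *\<^sub>R a" using t by blast
qed

lemma exists_gamma1_specialization:
  assumes "nonneg b" "0 < b \<bullet> p"
  obtains a where "a \<in> gamma1 c" "specializes c b a" "0 < a \<bullet> p"
proof -
  obtain r where r: "nonneg r" "specializes c b r" "0 < r \<bullet> p" "class_space c r \<subseteq> span {r}"
    using exists_ray_specialization[OF assms] by blast
  have "r \<noteq> 0" using r(3) by auto
  then obtain \<sigma> where \<sigma>: "\<sigma> > 0" "primitive_int (\<sigma> *\<^sub>R r)"
    using primitive_multiple_if_class_space_line r(4) by blast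
  have same: "minimizing_exponents c (\<sigma> *\<^sub>R r) = minimizing_exponents c r"
    "zero_coords (\<sigma> *\<^sub>R r) = zero_coords r"
    using minimizing_exponents_scaleR[OF \<sigma>(1)] \<sigma>(1) by (auto simp: zero_coords_def)
  have "r \<in> span {\<sigma> *\<^sub>R r}"
    using span_scale[OF span_base[of "\<sigma> *\<^sub>R r" "{\<sigma> *\<^sub>R r}"], of "1 / \<sigma>"] \<sigma>(1) by simp
  then have "span {r} \<subseteq> span {\<sigma> *\<^sub>R r}" by (simp add: span_minimal subspace_span)
  then have "\<sigma> *\<^sub>R r \<in> gamma1 c"
    using r(1,4) \<sigma> class_space_cong[OF same] by (intro gamma1I) (auto simp: nonneg_def)
  moreover have "specializes c b (\<sigma> *\<^sub>R r)" using r(2) same by (simp add: specializes_def)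
  moreover have "0 < (\<sigma> *\<^sub>R r) \<bullet> p" using \<sigma>(1) r(3) by simp
  ultimately show ?thesis using that by blast
qed

end

section \<open>The leading exponent\<close>

lemma sa_eq_inner_one: "sa a = a \<bullet> 1"
  by (simp add: sa_def inner_vec_def)

lemma ratio_le_leading_exponent:
  assumes "a \<in> gamma1_plus c"
  shows "1 - sa a / mf c a \<le> leading_exponent c"
  unfolding leading_exponent_def
proof (rule cSup_upper)
  show "1 - sa a / mf c a \<in> {0} \<union> {1 - sa a / mf c a | a. a \<in> gamma1_plus c}"
    using assms by blast
  have "1 - sa b / mf c b \<le> 1" if "b \<in> gamma1_plus c" for b
    using that nonneg_inner[OF _ nonneg_one, of b]
    by (auto simp: gamma1_plus_def gamma1_def sa_eq_inner_one)
  then show "bdd_above ({0} \<union> {1 - sa a / mf c a | a. a \<in> gamma1_plus c})"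
    by (intro bdd_aboveI[of _ 1]) auto
qed

lemma leading_exponent_eq_0I:
  assumes "\<And>a. a \<in> gamma1_plus c \<Longrightarrow> 1 - sa a / mf c a \<le> 0"
  shows "leading_exponent c = 0"
  unfolding leading_exponent_def by (rule cSup_eq_maximum) (use assms in auto)

context nonzero_polynomial
begin

lemma leading_exponent_pos_if_one_notin_newton_polyhedron:
  assumes "1 \<notin> newton_polyhedron c"
  shows "leading_exponent c > 0"
proof -
  obtain a \<beta> where sep: "a \<bullet> 1 < \<beta>" "\<And>x. x \<in> newton_polyhedron c \<Longrightarrow> \<beta> < a \<bullet> x"
    using separating_hyperplane_closed_point[OF convex_newton_polyhedron
        closed_newton_polyhedron assms]
    by blast
  then have "nonneg a"
    by (intro nonneg_if_bdd_below_newton_polyhedron bdd_belowI2[of _ \<beta>]) (simp add: less_imp_le)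
  obtain u0 where u0: "u0 \<in> minimizing_exponents c a" using minimizing_exponents_nonempty by blast
  then have "0 < a \<bullet> (u0 - 1)"
    using sep exponents_subset_newton_polyhedron
    by (force simp: minimizing_exponents_def inner_diff_right)
  then obtain a' where a': "a' \<in> gamma1 c" "specializes c a a'" "0 < a' \<bullet> (u0 - 1)"
    using exists_gamma1_specialization[OF \<open>nonneg a\<close>] by blast
  have "nonneg a'" using a'(1) by (simp add: gamma1_def)
  have "mf c a' = a' \<bullet> u0"
    using u0 a'(2) mf_eq_exponent_min[OF \<open>nonneg a'\<close>]
    by (auto simp: specializes_def minimizing_exponents_def)
  then have "sa a' < mf c a'" using a'(3) by (simp add: sa_eq_inner_one inner_diff_right)
  moreover have "0 \<le> sa a'" using nonneg_inner[OF \<open>nonneg a'\<close> nonneg_one]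
    by (simp add: sa_eq_inner_one)
  ultimately have "a' \<in> gamma1_plus c" "0 < 1 - sa a' / mf c a'"
    using a'(1) by (auto simp: gamma1_plus_def)
  then show ?thesis using ratio_le_leading_exponent by fastforce
qed

lemma leading_exponent_eq_0_if_one_in_newton_polyhedron:
  assumes "1 \<in> newton_polyhedron c"
  shows "leading_exponent c = 0"
proof (rule leading_exponent_eq_0I)
  fix a assume a: "a \<in> gamma1_plus c"
  then have "nonneg a" "0 < mf c a" by (auto simp: gamma1_plus_def gamma1_def)
  then have "mf c a \<le> sa a"
    using exponent_min_le_newton_polyhedron[OF _ assms]
    by (simp add: mf_eq_exponent_min sa_eq_inner_one)
  then show "1 - sa a / mf c a \<le> 0" using \<open>0 < mf c a\<close> by simp
qed

lemma newton_boundary_gammafE: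
  assumes "x \<in> newton_boundary c"
  obtains a where "nonneg a" "a \<noteq> 0" "x \<in> gammaf c a"
proof -
  obtain \<gamma> where \<gamma>: "\<gamma> face_of newton_polyhedron c" "compact \<gamma>" "x \<in> \<gamma>"
    using assms by (auto simp: newton_boundary_def)
  then have x: "x \<in> newton_polyhedron c" using face_of_imp_subset by blast
  have "\<gamma> \<noteq> newton_polyhedron c"
    using \<gamma>(2) not_bounded_newton_polyhedron compact_imp_bounded by blast
  then have "x \<notin> rel_interior (newton_polyhedron c)"
    using face_of_subset_rel_frontier[OF \<gamma>(1)] \<gamma>(3) by (auto simp: rel_frontier_def)
  then obtain a where a: "a \<noteq> 0" "\<And>y. y \<in> newton_polyhedron c \<Longrightarrow> a \<bullet> x \<le> a \<bullet> y"
    using supporting_hyperplane_rel_boundary[OF convex_newton_polyhedron x] by metis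
  then have "nonneg a" by (intro nonneg_if_bdd_below_newton_polyhedron bdd_belowI2)
  obtain u0 where "u0 \<in> minimizing_exponents c a" using minimizing_exponents_nonempty by blast
  then have "a \<bullet> x \<le> exponent_min c a"
    using a(2)[of u0] exponents_subset_newton_polyhedron[of c]
    by (auto simp: minimizing_exponents_def)
  then have "x \<in> gammaf c a"
    using exponent_min_le_newton_polyhedron[OF \<open>nonneg a\<close> x] x
    by (simp add: gammaf_eq[OF \<open>nonneg a\<close>])
  with \<open>nonneg a\<close> a(1) show ?thesis using that by blast
qed

lemma gamma1_max_nonempty_if_one_in_newton_boundary:
  assumes "1 \<in> newton_boundary c"
  shows "gamma1_max c \<noteq> {}"
proof -
  obtain a where a: "nonneg a" "a \<noteq> 0" "1 \<in> gammaf c a"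
    using newton_boundary_gammafE[OF assms] by blast
  then obtain a' where a': "a' \<in> gamma1 c" "specializes c a a'" "0 < a' \<bullet> 1"
    using exists_gamma1_specialization[OF a(1) inner_one_pos[OF a(1,2)]] by blast
  have "nonneg a'" using a'(1) by (simp add: gamma1_def)
  then have "1 \<in> gammaf c a'" using gammaf_mono[OF a(1)] a'(2) a(3) by blast
  then have "mf c a' = sa a'" "1 \<in> newton_polyhedron c"
    by (simp_all add: gammaf_def sa_eq_inner_one)
  then have "a' \<in> gamma1_max c"
    using a' leading_exponent_eq_0_if_one_in_newton_polyhedron
    by (simp add: gamma1_max_def gamma1_plus_def sa_eq_inner_one)
  then show ?thesis by blast
qed

lemma gamma1_max_empty_if_one_in_interior:
  assumes "1 \<in> interior (newton_polyhedron c)"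
  shows "gamma1_max c = {}"
proof -
  obtain e where e: "e > 0" "ball 1 e \<subseteq> newton_polyhedron c" using assms mem_interior by blast
  have "1 - sa a / mf c a < 0" if a: "a \<in> gamma1_plus c" for a
  proof -
    have "nonneg a" "a \<noteq> 0" "0 < mf c a" using a
      by (auto simp: gamma1_plus_def gamma1_def primitive_int_def)
    define y where "y = 1 - (e / (2 * norm a)) *\<^sub>R a"
    have "y \<in> newton_polyhedron c"
      using e \<open>a \<noteq> 0\<close> by (intro subsetD[OF e(2)]) (simp add: y_def dist_norm)
    then have "mf c a \<le> a \<bullet> y"
      using exponent_min_le_newton_polyhedron[OF \<open>nonneg a\<close>]
      by (simp add: mf_eq_exponent_min[OF \<open>nonneg a\<close>])
    also have "a \<bullet> y = sa a - e / 2 * norm a"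
      using \<open>a \<noteq> 0\<close>
      by (simp add: y_def inner_diff_right sa_eq_inner_one dot_square_norm power2_eq_square)
    finally have "mf c a \<le> sa a - e / 2 * norm a" .
    moreover have "0 < e / 2 * norm a" using e(1) \<open>a \<noteq> 0\<close> by simp
    ultimately have "mf c a < sa a" by linarith
    then show ?thesis using \<open>0 < mf c a\<close> by simp
  qed
  moreover have "leading_exponent c = 0"
    using leading_exponent_eq_0_if_one_in_newton_polyhedron interior_subset assms by blast
  ultimately show ?thesis by (fastforce simp: gamma1_max_def)
qed

end

theorem mainTheorem4:
  fixes c :: "('n::finite \<Rightarrow> nat) \<Rightarrow> real"
  assumes fin: "finite (supp c)"
    and nonzero: "supp c \<noteq> {}"
    and nd: "nondegenerate c"
    and f0: "peval c 0 = 0"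
  shows "((\<chi> i. 1) \<notin> newton_polyhedron c \<longrightarrow> leading_exponent c > 0)
       \<and> ((\<chi> i. 1) \<in> newton_boundary c \<longrightarrow> leading_exponent c = 0 \<and> gamma1_max c \<noteq> {})
       \<and> ((\<chi> i. 1) \<in> interior (newton_polyhedron c) \<longrightarrow>
            leading_exponent c = 0 \<and> gamma1_max c = {})"
proof -
  interpret nonzero_polynomial c using fin nonzero by unfold_locales
  have one: "(\<chi> i. 1) = (1::real^'n)" by (simp add: vec_eq_iff)
  have "newton_boundary c \<subseteq> newton_polyhedron c"
    unfolding newton_boundary_def using face_of_imp_subset by blast
  then show ?thesis
    unfolding one
    using leading_exponent_pos_if_one_notin_newton_polyhedron interior_subset
      leading_exponent_eq_0_if_one_in_newton_polyhedron
      gamma1_max_nonempty_if_one_in_newton_boundary gamma1_max_empty_if_one_in_interior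
    by blast
qed

end
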